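(* Let $\alpha,\beta,\Delta\in\mathbb{C}$. The conformal $\widetilde{\mathrm{SV}}$-module $V(\alpha,\beta,\Delta)$ is irreducible if and only if $\Delta\neq0$ or $\beta\neq0$.
   Context: A conformal module over a Lie conformal algebra $R$ is a $\mathbb{C}[\partial]$-module $V$ with $a\mapsto a_\lambda\in\mathrm{End}_{\mathbb{C}}(V)\otimes\mathbb{C}[\lambda]$ satisfying $[a_\lambda,b_\mu]=[a_\lambda b]_{\lambda+\mu}$ and $(\partial a)_\lambda=[\partial,a_\lambda]=-\lambda a_\lambda$; it is irreducible if it has no nonzero proper submodule ($\mathbb{C}[\partial]$-submodule stable under all $a_\lambda$). $\widetilde{\mathrm{SV}}$ is the Lie conformal algebra that is the free $\mathbb{C}[\partial]$-module with basis $L,M,Y,N$ whose nonzero $\lambda$-brackets (up to skew-symmetry) are $[L_\lambda L]=(\partial+2\lambda)L$, $[L_\lambda Y]=(\partial+\tfrac32\lambda)Y$, $[L_\lambda M]=(\partial+\lambda)M$, $[Y_\lambda Y]=(\partial+2\lambda)M$, $[L_\lambda N]=(\partial+\lambda)N$, $[N_\lambda M]=2M$, $[N_\lambda Y]=Y$. $V(\alpha,\beta,\Delta)=\mathbb{C}[\partial]v_\Delta$ is the free rank-one module with $L_\lambda v_\Delta=(\partial+\alpha+\Delta\lambda)v_\Delta$, $N_\lambda v_\Delta=\beta v_\Delta$, $M_\lambda v_\Delta=Y_\lambda v_\Delta=0$. *)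

theory Defs
  imports "HOL-Computational_Algebra.Polynomial"
begin

text \<open>
  The module V(alpha,beta,Delta) = C[d] v is modelled by the type complex poly:
  the polynomial p stands for p(d) v.  A lambda-polynomial with values in V,
  i.e. an element of V[lambda], is modelled by complex poly poly: the outer
  variable is lambda, the coefficients are elements of V = C[d].
\<close>

text \<open>Elements of SV~ = C[d]L + C[d]M + C[d]Y + C[d]N, given by their four
  coefficient polynomials (for L, M, Y, N respectively).\<close>
type_synonym sv_elem = "complex poly \<times> complex poly \<times> complex poly \<times> complex poly"

text \<open>p(d + lambda) as an element of C[d][lambda].\<close>
definition shift_poly :: "complex poly \<Rightarrow> complex poly poly" where
  "shift_poly p = poly (map_poly (\<lambda>c. [:[:c:]:]) p) [:[:0, 1:], 1:]"

definition neg_lam :: "complex poly \<Rightarrow> complex poly poly" where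
  "neg_lam q = map_poly (\<lambda>c. [:c:]) (q \<circ>\<^sub>p [:0, -1:])"

text \<open>Action of the basis elements on p(d) v, using a_lambda (p(d) v) = p(d+lambda) a_lambda v:
  L_lambda v = (d + alpha + Delta lambda) v, N_lambda v = beta v, M_lambda v = Y_lambda v = 0.\<close>
definition act_L :: "complex \<Rightarrow> complex \<Rightarrow> complex poly \<Rightarrow> complex poly poly" where
  "act_L \<alpha> \<Delta> p = shift_poly p * [:[:\<alpha>, 1:], [:\<Delta>:]:]"

definition act_N :: "complex \<Rightarrow> complex poly \<Rightarrow> complex poly poly" where
  "act_N \<beta> p = shift_poly p * [:[:\<beta>:]:]"

text \<open>Action of a general element a = q1(d)L + q2(d)M + q3(d)Y + q4(d)N, using
  (q(d) a)_lambda = q(-lambda) a_lambda.\<close>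
definition act_V :: "complex \<Rightarrow> complex \<Rightarrow> complex \<Rightarrow> sv_elem \<Rightarrow> complex poly \<Rightarrow> complex poly poly" where
  "act_V \<alpha> \<beta> \<Delta> a p =
     (case a of (qL, qM, qY, qN) \<Rightarrow>
        neg_lam qL * act_L \<alpha> \<Delta> p + neg_lam qM * 0 + neg_lam qY * 0 + neg_lam qN * act_N \<beta> p)"

definition is_submodule_V :: "complex \<Rightarrow> complex \<Rightarrow> complex \<Rightarrow> complex poly set \<Rightarrow> bool" where
  "is_submodule_V \<alpha> \<beta> \<Delta> W \<longleftrightarrow>
     0 \<in> W \<and> (\<forall>u\<in>W. \<forall>w\<in>W. u + w \<in> W) \<and> (\<forall>q. \<forall>w\<in>W. q * w \<in> W) \<and>
     (\<forall>a w k. w \<in> W \<longrightarrow> coeff (act_V \<alpha> \<beta> \<Delta> a w) k \<in> W)"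

definition irreducible_V :: "complex \<Rightarrow> complex \<Rightarrow> complex \<Rightarrow> bool" where
  "irreducible_V \<alpha> \<beta> \<Delta> \<longleftrightarrow>
     (\<forall>W. is_submodule_V \<alpha> \<beta> \<Delta> W \<longrightarrow> W = {0} \<or> W = UNIV)"

end

theory Submission
  imports Defs
begin

text \<open>If \<open>\<beta> \<noteq> 0\<close> (resp. \<open>\<Delta> \<noteq> 0\<close>), the highest \<open>\<lambda>\<close>-coefficient of \<open>N\<^sub>\<lambda> w\<close>
  (resp. \<open>L\<^sub>\<lambda> w\<close>) for a nonzero \<open>w = p(\<partial>) v\<close> is the nonzero constant \<open>\<beta> lc(p)\<close>
  (resp. \<open>\<Delta> lc(p)\<close>), so every nonzero submodule contains \<open>v\<close> and is everything.
  If \<open>\<beta> = \<Delta> = 0\<close>, every \<open>a\<^sub>\<lambda>\<close> acts through \<open>L\<^sub>\<lambda>\<close>, whose image is divisible by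
  \<open>\<partial> + \<alpha>\<close>; hence \<open>\<complex>[\<partial>](\<partial> + \<alpha>) v\<close> is a proper nonzero submodule.\<close>

lemma shift_poly_0 [simp]: "shift_poly 0 = 0"
  unfolding shift_poly_def by simp

lemma shift_poly_pCons:
  "shift_poly (pCons a p) = [:[:a:]:] + [:[:0, 1:], 1:] * shift_poly p"
  unfolding shift_poly_def by (simp add: map_poly_pCons)

lemma degree_shift_poly_le_and_coeff:
  "degree (shift_poly p) \<le> degree p \<and> coeff (shift_poly p) (degree p) = [:lead_coeff p:]"
proof (induction p rule: pCons_induct)
  case 0
  then show ?case by simp
next
  case (pCons a p)
  show ?case
  proof (cases "p = 0")
    case True
    then show ?thesis by (simp add: shift_poly_pCons)
  next
    case False
    let ?S = "shift_poly p" and ?X = "[:[:0, 1:], 1:] :: complex poly poly"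
    have deg_S: "degree ?S = degree p"
      using pCons.IH False by (metis le_antisym le_degree leading_coeff_0_iff pCons_eq_0_iff)
    have "degree (?X * ?S) \<le> degree p + 1"
      using degree_mult_le[of ?X ?S] deg_S by simp
    then have "degree ([:[:a:]:] + ?X * ?S) \<le> degree p + 1"
      by (intro degree_add_le) simp_all
    moreover have "coeff (?X * ?S) (degree p + 1) = [:lead_coeff p:]"
      using coeff_mult_degree_sum[of ?X ?S] deg_S pCons.IH by simp
    ultimately show ?thesis
      using False by (simp add: shift_poly_pCons)
  qed
qed

lemma degree_shift_poly_le: "degree (shift_poly p) \<le> degree p"
  using degree_shift_poly_le_and_coeff by blast

lemma coeff_shift_poly_degree: "coeff (shift_poly p) (degree p) = [:lead_coeff p:]"
  using degree_shift_poly_le_and_coeff by blast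

lemma neg_lam_0 [simp]: "neg_lam 0 = 0"
  unfolding neg_lam_def by simp

lemma neg_lam_1 [simp]: "neg_lam 1 = 1"
  unfolding neg_lam_def by (simp add: one_pCons map_poly_pCons)

lemma act_V_L: "act_V \<alpha> \<beta> \<Delta> (1, 0, 0, 0) p = act_L \<alpha> \<Delta> p"
  by (simp add: act_V_def)

lemma act_V_N: "act_V \<alpha> \<beta> \<Delta> (0, 0, 0, 1) p = act_N \<beta> p"
  by (simp add: act_V_def)

lemma coeff_act_N_degree: "coeff (act_N \<beta> p) (degree p) = [:\<beta> * lead_coeff p:]"
proof -
  have "act_N \<beta> p = smult [:\<beta>:] (shift_poly p)"
    by (simp add: act_N_def mult.commute)
  then show ?thesis
    by (simp add: coeff_shift_poly_degree)
qed

lemma coeff_act_L_Suc_degree: "coeff (act_L \<alpha> \<Delta> p) (Suc (degree p)) = [:\<Delta> * lead_coeff p:]"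
proof -
  have "act_L \<alpha> \<Delta> p = smult [:\<alpha>, 1:] (shift_poly p) + pCons 0 (smult [:\<Delta>:] (shift_poly p))"
    by (simp add: act_L_def mult.commute)
  moreover have "coeff (shift_poly p) (Suc (degree p)) = 0"
    using degree_shift_poly_le by (intro coeff_eq_0) (simp add: le_imp_less_Suc)
  ultimately show ?thesis
    by (simp add: coeff_shift_poly_degree)
qed

lemma submodule_eq_UNIV_if_const_mem:
  assumes "is_submodule_V \<alpha> \<beta> \<Delta> W" and "[:c:] \<in> W" and "c \<noteq> 0"
  shows "W = UNIV"
proof -
  have "q * ([:1 / c:] * [:c:]) \<in> W" for q
    using assms(1,2) unfolding is_submodule_V_def by blast
  with \<open>c \<noteq> 0\<close> show ?thesis
    by (auto simp: one_pCons)
qed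

lemma submodule_has_nonzero_const:
  assumes sub: "is_submodule_V \<alpha> \<beta> \<Delta> W" and "w \<in> W" "w \<noteq> 0" and "\<Delta> \<noteq> 0 \<or> \<beta> \<noteq> 0"
  obtains c where "c \<noteq> 0" "[:c:] \<in> W"
proof -
  have coeff_mem: "coeff (act_V \<alpha> \<beta> \<Delta> a w) k \<in> W" for a k
    using sub \<open>w \<in> W\<close> unfolding is_submodule_V_def by blast
  have "lead_coeff w \<noteq> 0"
    using \<open>w \<noteq> 0\<close> by simp
  show ?thesis
  proof (cases "\<beta> = 0")
    case False
    have "[:\<beta> * lead_coeff w:] \<in> W"
      using coeff_mem[of "(0, 0, 0, 1)" "degree w"] by (simp add: act_V_N coeff_act_N_degree)
    with False \<open>lead_coeff w \<noteq> 0\<close> show ?thesis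
      by (intro that) simp_all
  next
    case True
    have "[:\<Delta> * lead_coeff w:] \<in> W"
      using coeff_mem[of "(1, 0, 0, 0)" "Suc (degree w)"] by (simp add: act_V_L coeff_act_L_Suc_degree)
    with True assms(4) \<open>lead_coeff w \<noteq> 0\<close> show ?thesis
      by (intro that) simp_all
  qed
qed

lemma irreducible_V_if_nondegenerate:
  assumes "\<Delta> \<noteq> 0 \<or> \<beta> \<noteq> 0"
  shows "irreducible_V \<alpha> \<beta> \<Delta>"
  unfolding irreducible_V_def
proof (intro allI impI)
  fix W assume sub: "is_submodule_V \<alpha> \<beta> \<Delta> W"
  show "W = {0} \<or> W = UNIV"
  proof (cases "W \<subseteq> {0}")
    case True
    then show ?thesis
      using sub unfolding is_submodule_V_def by blast
  next
    case False
    then obtain w where "w \<in> W" "w \<noteq> 0" by blast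
    then obtain c where "c \<noteq> 0" "[:c:] \<in> W"
      using submodule_has_nonzero_const[OF sub _ _ assms] by blast
    with sub show ?thesis
      using submodule_eq_UNIV_if_const_mem by blast
  qed
qed

lemma act_V_degenerate:
  "act_V \<alpha> 0 0 (qL, qM, qY, qN) p = smult [:\<alpha>, 1:] (neg_lam qL * shift_poly p)"
  by (simp add: act_V_def act_L_def act_N_def mult.commute mult.left_commute)

lemma is_submodule_V_multiples: "is_submodule_V \<alpha> 0 0 {p. [:\<alpha>, 1:] dvd p}"
  unfolding is_submodule_V_def
proof (intro conjI allI ballI impI)
  fix a :: sv_elem and w k
  obtain qL qM qY qN where "a = (qL, qM, qY, qN)"
    by (cases a)
  then have "coeff (act_V \<alpha> 0 0 a w) k = [:\<alpha>, 1:] * coeff (neg_lam qL * shift_poly w) k"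
    by (simp only: act_V_degenerate coeff_smult)
  then show "coeff (act_V \<alpha> 0 0 a w) k \<in> {p. [:\<alpha>, 1:] dvd p}"
    by (metis dvd_triv_left mem_Collect_eq)
qed simp_all

lemma not_irreducible_V_degenerate: "\<not> irreducible_V \<alpha> 0 0"
proof
  let ?W = "{p. [:\<alpha>, 1:] dvd p}"
  assume "irreducible_V \<alpha> 0 0"
  then have "?W = {0} \<or> ?W = UNIV"
    using is_submodule_V_multiples unfolding irreducible_V_def by blast
  moreover have "[:\<alpha>, 1:] \<in> ?W" and "[:\<alpha>, 1:] \<noteq> 0"
    by simp_all
  moreover have "\<not> [:\<alpha>, 1:] dvd 1"
    by (subst is_unit_iff_degree) simp_all
  ultimately show False
    by blast
qed

theorem proposition4p1:
  fixes \<alpha> \<beta> \<Delta> :: complex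
  shows "irreducible_V \<alpha> \<beta> \<Delta> \<longleftrightarrow> (\<Delta> \<noteq> 0 \<or> \<beta> \<noteq> 0)"
  using irreducible_V_if_nondegenerate not_irreducible_V_degenerate by blast

end
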